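(* Let $d\ge 2$ and let $n$ be an integer with $1\le n<d$. Let $\{|\psi_k\rangle\}_{k=1}^{d^2}$ be a complete orthonormal basis of $\mathbb{C}^d\otimes\mathbb{C}^d$ consisting of maximally entangled states. Regard $\mathbb{C}^d\otimes\mathbb{C}^d$ as the subspace of $\mathbb{C}^d\otimes\mathbb{C}^{d+n}$ spanned by $|i\rangle|j\rangle$ with $0\le i,j\le d-1$ (where $\{|j\rangle\}_{j=0}^{d+n-1}$ is an orthonormal basis of $\mathbb{C}^{d+n}$). Then $\{|\psi_k\rangle\}_{k=1}^{d^2}$ is an unextendible maximally entangled basis of $\mathbb{C}^d\otimes\mathbb{C}^{d+n}$.
   Context: In $\mathbb{C}^{d_1}\otimes\mathbb{C}^{d_2}$ with $d_1\le d_2$, a pure state is maximally entangled if it has $d_1$ nonzero Schmidt coefficients, all equal (to $1/\sqrt{d_1}$). An unextendible maximally entangled basis (UMEB) of $\mathbb{C}^{d_1}\otimes\mathbb{C}^{d_2}$ is a set of mutually orthogonal maximally entangled states spanning a proper subspace of $\mathbb{C}^{d_1}\otimes\mathbb{C}^{d_2}$ such that the orthogonal complement of this span contains no maximally entangled state. *)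

theory Defs
  imports Complex_Main
begin

text \<open>An element of C^d1 (x) C^d2 is represented by its coefficient function
  psi i j = coefficient of |i>|j>, with i < d1, j < d2; coefficients outside
  this range are required to vanish.  In particular C^d (x) C^d, embedded into
  C^d (x) C^(d+n) as the span of |i>|j> with i,j < d, is literally a subset.\<close>

type_synonym bistate = "nat \<Rightarrow> nat \<Rightarrow> complex"

definition in_space :: "nat \<Rightarrow> nat \<Rightarrow> bistate \<Rightarrow> bool" where
  "in_space d1 d2 \<psi> \<longleftrightarrow> (\<forall>i j. (d1 \<le> i \<or> d2 \<le> j) \<longrightarrow> \<psi> i j = 0)"

definition space :: "nat \<Rightarrow> nat \<Rightarrow> bistate set" where
  "space d1 d2 = {\<psi>. in_space d1 d2 \<psi>}"

definition ip :: "nat \<Rightarrow> nat \<Rightarrow> bistate \<Rightarrow> bistate \<Rightarrow> complex" where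
  "ip d1 d2 \<phi> \<psi> = (\<Sum>i<d1. \<Sum>j<d2. cnj (\<phi> i j) * \<psi> i j)"

definition orthonormal_fam :: "nat \<Rightarrow> nat \<Rightarrow> (nat \<Rightarrow> nat \<Rightarrow> complex) \<Rightarrow> bool" where
  "orthonormal_fam m r a \<longleftrightarrow>
     (\<forall>k<r. \<forall>l<r. (\<Sum>i<m. cnj (a k i) * a l i) = (if k = l then 1 else 0))"

text \<open>Maximally entangled (d1 \<le> d2): a Schmidt decomposition with d1 nonzero
  Schmidt coefficients, all equal to 1/sqrt d1.\<close>
definition max_ent :: "nat \<Rightarrow> nat \<Rightarrow> bistate \<Rightarrow> bool" where
  "max_ent d1 d2 \<psi> \<longleftrightarrow> d1 \<le> d2 \<and> in_space d1 d2 \<psi> \<and>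
     (\<exists>a b. orthonormal_fam d1 d1 a \<and> orthonormal_fam d2 d1 b \<and>
        (\<forall>i<d1. \<forall>j<d2. \<psi> i j = (\<Sum>k<d1. complex_of_real (1 / sqrt (real d1)) * a k i * b k j)))"

definition span_fam :: "nat \<Rightarrow> (nat \<Rightarrow> bistate) \<Rightarrow> bistate set" where
  "span_fam m \<psi> = {\<phi>. \<exists>c. \<forall>i j. \<phi> i j = (\<Sum>k<m. c k * \<psi> k i j)}"

definition UMEB :: "nat \<Rightarrow> nat \<Rightarrow> nat \<Rightarrow> (nat \<Rightarrow> bistate) \<Rightarrow> bool" where
  "UMEB d1 d2 m \<psi> \<longleftrightarrow>
     (\<forall>k<m. max_ent d1 d2 (\<psi> k)) \<and>
     (\<forall>k<m. \<forall>l<m. k \<noteq> l \<longrightarrow> ip d1 d2 (\<psi> k) (\<psi> l) = 0) \<and>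
     span_fam m \<psi> \<subset> space d1 d2 \<and>
     \<not> (\<exists>\<phi>. \<phi> \<in> space d1 d2 \<and> (\<forall>k<m. ip d1 d2 (\<psi> k) \<phi> = 0) \<and> max_ent d1 d2 \<phi>)"

end

theory Submission
  imports Defs
begin

text \<open>A maximally entangled state orthogonal to a basis of C^d (x) C^d vanishes on the d x d
  block, so its second Schmidt vectors are d orthonormal vectors of C^(d+n) supported on the
  last n coordinates.  By Bessel's inequality every coordinate contributes at most 1 to the
  total squared norm d of these vectors, whence d \<le> n.\<close>

lemma sum_cnj_mult_self:
  "(\<Sum>i\<in>A. cnj (z i) * z i) = complex_of_real (\<Sum>i\<in>A. (cmod (z i))\<^sup>2)"
  unfolding of_real_sum by (intro sum.cong refl) (subst complex_norm_square, simp add: mult.commute)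

lemma orthonormal_fam_combination_ip:
  assumes "orthonormal_fam m r b"
  shows "(\<Sum>i<m. cnj (\<Sum>k<r. u k * b k i) * (\<Sum>l<r. v l * b l i)) = (\<Sum>k<r. cnj (u k) * v k)"
proof -
  have "(\<Sum>i<m. cnj (\<Sum>k<r. u k * b k i) * (\<Sum>l<r. v l * b l i))
      = (\<Sum>i<m. \<Sum>k<r. \<Sum>l<r. cnj (u k) * v l * (cnj (b k i) * b l i))"
    by (simp add: sum_distrib_left sum_distrib_right mult_ac)
  also have "\<dots> = (\<Sum>k<r. \<Sum>l<r. \<Sum>i<m. cnj (u k) * v l * (cnj (b k i) * b l i))"
    by (subst sum.swap) (rule sum.cong[OF refl], rule sum.swap)
  also have "\<dots> = (\<Sum>k<r. \<Sum>l<r. cnj (u k) * v l * (\<Sum>i<m. cnj (b k i) * b l i))"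
    by (simp add: sum_distrib_left)
  also have "\<dots> = (\<Sum>k<r. \<Sum>l<r. if l = k then cnj (u k) * v l else 0)"
    using assms unfolding orthonormal_fam_def by (intro sum.cong refl) auto
  finally show ?thesis by simp
qed

lemma orthonormal_fam_bessel:
  assumes "orthonormal_fam m r b"
  shows "(\<Sum>k<r. (cmod (\<Sum>i<m. cnj (b k i) * x i))\<^sup>2) \<le> (\<Sum>i<m. (cmod (x i))\<^sup>2)"
proof -
  define c where "c k = (\<Sum>i<m. cnj (b k i) * x i)" for k
  define s where "s i = (\<Sum>k<r. c k * b k i)" for i
  \<comment> \<open>the orthogonal projection of x onto the span of the b k; the inequality is |x - s|^2 \<ge> 0\<close>
  define S where "S = (\<Sum>k<r. (cmod (c k))\<^sup>2)"
  have ss: "(\<Sum>i<m. cnj (s i) * s i) = of_real S"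
    unfolding s_def S_def orthonormal_fam_combination_ip[OF assms] by (rule sum_cnj_mult_self)
  have xs: "(\<Sum>i<m. cnj (x i) * s i) = of_real S"
  proof -
    have "(\<Sum>i<m. cnj (x i) * s i) = (\<Sum>i<m. \<Sum>k<r. c k * (cnj (x i) * b k i))"
      unfolding s_def by (simp add: sum_distrib_left mult_ac)
    also have "\<dots> = (\<Sum>k<r. c k * (\<Sum>i<m. cnj (x i) * b k i))"
      by (subst sum.swap) (simp add: sum_distrib_left)
    also have "\<dots> = (\<Sum>k<r. cnj (c k) * c k)"
      unfolding c_def by (simp add: mult_ac)
    finally show ?thesis unfolding S_def sum_cnj_mult_self .
  qed
  have sx: "(\<Sum>i<m. cnj (s i) * x i) = of_real S"
  proof -
    have "(\<Sum>i<m. cnj (s i) * x i) = cnj (\<Sum>i<m. cnj (x i) * s i)"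
      by (simp add: mult.commute)
    then show ?thesis using xs by simp
  qed
  have "complex_of_real (\<Sum>i<m. (cmod (x i - s i))\<^sup>2) = (\<Sum>i<m. cnj (x i - s i) * (x i - s i))"
    by (rule sum_cnj_mult_self[symmetric])
  also have "\<dots> = (\<Sum>i<m. cnj (x i) * x i) - (\<Sum>i<m. cnj (x i) * s i)
      - (\<Sum>i<m. cnj (s i) * x i) + (\<Sum>i<m. cnj (s i) * s i)"
    by (simp add: algebra_simps sum.distrib sum_subtractf)
  also have "\<dots> = of_real ((\<Sum>i<m. (cmod (x i))\<^sup>2) - S)"
    unfolding xs sx ss by (simp add: sum_cnj_mult_self)
  finally have "(\<Sum>i<m. (cmod (x i - s i))\<^sup>2) = (\<Sum>i<m. (cmod (x i))\<^sup>2) - S"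
    using of_real_eq_iff by blast
  moreover have "0 \<le> (\<Sum>i<m. (cmod (x i - s i))\<^sup>2)"
    by (simp add: sum_nonneg)
  ultimately show ?thesis unfolding S_def c_def by linarith
qed

lemma orthonormal_fam_column_bound:
  assumes "orthonormal_fam m r b" and "j < m"
  shows "(\<Sum>k<r. (cmod (b k j))\<^sup>2) \<le> 1"
proof -
  define e where "e i = (if i = j then 1 else 0 :: complex)" for i
  have "(\<Sum>i<m. cnj (b k i) * e i) = (\<Sum>i<m. if i = j then cnj (b k i) else 0)" for k
    by (intro sum.cong) (auto simp: e_def)
  then have "(\<Sum>i<m. cnj (b k i) * e i) = cnj (b k j)" for k
    using assms(2) by simp
  moreover have "(\<Sum>i<m. (cmod (e i))\<^sup>2) = (\<Sum>i<m. if i = j then 1 else 0)"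
    by (intro sum.cong) (auto simp: e_def)
  ultimately show ?thesis
    using orthonormal_fam_bessel[OF assms(1), of e] assms(2) by simp
qed

lemma orthonormal_fam_row_norm:
  assumes "orthonormal_fam m r b" and "k < r"
  shows "(\<Sum>j<m. (cmod (b k j))\<^sup>2) = 1"
  using assms sum_cnj_mult_self[of "b k" "{..<m}"] unfolding orthonormal_fam_def
  by (metis of_real_eq_1_iff)

lemma orthonormal_fam_vanishing_card_le:
  assumes on: "orthonormal_fam m r b" and zero: "\<And>k j. k < r \<Longrightarrow> j < p \<Longrightarrow> j < m \<Longrightarrow> b k j = 0"
  shows "r \<le> m - p"
proof -
  have row: "(\<Sum>j\<in>{p..<m}. (cmod (b k j))\<^sup>2) = 1" if "k < r" for k
  proof -
    have "(\<Sum>j\<in>{p..<m}. (cmod (b k j))\<^sup>2) = (\<Sum>j<m. (cmod (b k j))\<^sup>2)"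
      by (rule sum.mono_neutral_left) (auto simp: zero that)
    then show ?thesis using orthonormal_fam_row_norm[OF on that] by simp
  qed
  have "real r = (\<Sum>k<r. \<Sum>j\<in>{p..<m}. (cmod (b k j))\<^sup>2)"
    using row by simp
  also have "\<dots> = (\<Sum>j\<in>{p..<m}. \<Sum>k<r. (cmod (b k j))\<^sup>2)"
    by (rule sum.swap)
  also have "\<dots> \<le> (\<Sum>j\<in>{p..<m}. 1)"
    by (intro sum_mono orthonormal_fam_column_bound[OF on]) auto
  finally show ?thesis by simp
qed

definition ket :: "nat \<Rightarrow> nat \<Rightarrow> bistate" where
  "ket i0 j0 = (\<lambda>i j. if i = i0 \<and> j = j0 then 1 else 0)"

lemma ket_in_space: "in_space d1 d2 (ket i0 j0) \<longleftrightarrow> i0 < d1 \<and> j0 < d2"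
  by (auto simp: in_space_def ket_def)

lemma ip_ket_left:
  assumes "i0 < d1" and "j0 < d2"
  shows "ip d1 d2 (ket i0 j0) \<phi> = \<phi> i0 j0"
proof -
  have "ip d1 d2 (ket i0 j0) \<phi> = (\<Sum>i<d1. \<Sum>j<d2. if i = i0 \<and> j = j0 then \<phi> i j else 0)"
    unfolding ip_def by (intro sum.cong refl) (simp add: ket_def)
  also have "\<dots> = (\<Sum>i<d1. if i = i0 then \<phi> i j0 else 0)"
    using assms by (intro sum.cong refl) auto
  finally show ?thesis using assms by simp
qed

lemma ip_orthogonal_span:
  assumes "\<forall>k<m. ip d1 d2 (\<psi> k) \<phi> = 0" and "\<chi> \<in> span_fam m \<psi>"
  shows "ip d1 d2 \<chi> \<phi> = 0"
proof -
  from assms(2) obtain c where c: "\<And>i j. \<chi> i j = (\<Sum>k<m. c k * \<psi> k i j)"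
    unfolding span_fam_def by blast
  have "ip d1 d2 \<chi> \<phi> = (\<Sum>i<d1. \<Sum>j<d2. \<Sum>k<m. cnj (c k) * (cnj (\<psi> k i j) * \<phi> i j))"
    unfolding ip_def c by (simp add: sum_distrib_right mult.assoc)
  also have "\<dots> = (\<Sum>k<m. \<Sum>i<d1. \<Sum>j<d2. cnj (c k) * (cnj (\<psi> k i j) * \<phi> i j))"
    by (subst sum.swap) (rule sum.cong[OF refl], rule sum.swap)
  also have "\<dots> = (\<Sum>k<m. cnj (c k) * ip d1 d2 (\<psi> k) \<phi>)"
    unfolding ip_def sum_distrib_left ..
  finally show ?thesis using assms(1) by simp
qed

lemma space_psubset:
  assumes "0 < d1" and "p < d2"
  shows "space d1 p \<subset> space d1 d2"
proof -
  have "space d1 p \<subseteq> space d1 d2"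
    using assms(2) by (auto simp: space_def in_space_def)
  moreover have "ket 0 p \<in> space d1 d2 - space d1 p"
    using assms by (simp add: space_def ket_in_space)
  ultimately show ?thesis by blast
qed

lemma orthogonal_spanning_family_vanishes:
  assumes span: "span_fam m \<psi> = space d1 p" and "p \<le> d2"
    and orth: "\<forall>k<m. ip d1 d2 (\<psi> k) \<phi> = 0" and "i < d1" and "j < p"
  shows "\<phi> i j = 0"
proof -
  have "ket i j \<in> span_fam m \<psi>"
    using span assms(4,5) by (simp add: space_def ket_in_space)
  then have "ip d1 d2 (ket i j) \<phi> = 0"
    by (rule ip_orthogonal_span[OF orth])
  then show ?thesis using ip_ket_left[of i d1 j d2 \<phi>] assms(2,4,5) by simp
qed

lemma ip_extend_right:
  assumes "in_space d1 d2 \<psi>" and "d2 \<le> d2'"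
  shows "ip d1 d2' \<psi> \<phi> = ip d1 d2 \<psi> \<phi>"
proof -
  have "(\<Sum>j<d2'. cnj (\<psi> i j) * \<phi> i j) = (\<Sum>j<d2. cnj (\<psi> i j) * \<phi> i j)" for i
    by (rule sum.mono_neutral_right) (use assms in \<open>auto simp: in_space_def\<close>)
  then show ?thesis unfolding ip_def by simp
qed

lemma max_ent_extend:
  assumes "max_ent d1 d2 \<psi>" and "d2 \<le> d2'"
  shows "max_ent d1 d2' \<psi>"
proof -
  from assms(1) obtain a b where sp: "in_space d1 d2 \<psi>" and "d1 \<le> d2"
    and oa: "orthonormal_fam d1 d1 a" and ob: "orthonormal_fam d2 d1 b"
    and rep: "\<forall>i<d1. \<forall>j<d2. \<psi> i j = (\<Sum>k<d1. complex_of_real (1 / sqrt (real d1)) * a k i * b k j)"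
    unfolding max_ent_def by blast
  define b' where "b' k j = (if j < d2 then b k j else 0)" for k j
  have "orthonormal_fam d2' d1 b'"
    unfolding orthonormal_fam_def
  proof (intro allI impI)
    fix k l assume "k < d1" "l < d1"
    have "(\<Sum>j<d2'. cnj (b' k j) * b' l j) = (\<Sum>j<d2. cnj (b k j) * b l j)"
      by (rule sum.mono_neutral_cong_right) (use assms(2) in \<open>auto simp: b'_def\<close>)
    then show "(\<Sum>j<d2'. cnj (b' k j) * b' l j) = (if k = l then 1 else 0)"
      using ob \<open>k < d1\<close> \<open>l < d1\<close> unfolding orthonormal_fam_def by simp
  qed
  moreover have "\<forall>i<d1. \<forall>j<d2'. \<psi> i j = (\<Sum>k<d1. complex_of_real (1 / sqrt (real d1)) * a k i * b' k j)"
  proof (intro allI impI)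
    fix i j assume "i < d1" "j < d2'"
    then show "\<psi> i j = (\<Sum>k<d1. complex_of_real (1 / sqrt (real d1)) * a k i * b' k j)"
      using rep sp by (cases "j < d2") (simp_all add: b'_def in_space_def)
  qed
  moreover have "in_space d1 d2' \<psi>"
    using sp assms(2) by (auto simp: in_space_def)
  ultimately show ?thesis
    unfolding max_ent_def using \<open>d1 \<le> d2\<close> assms(2) oa by auto
qed

text \<open>The first Schmidt basis is a unitary matrix, so contracting the state with it recovers the
  second Schmidt vectors, which therefore vanish on the columns where the state does.\<close>
lemma max_ent_vanishing_columns:
  assumes "max_ent d1 d2 \<phi>" and zero: "\<And>i j. i < d1 \<Longrightarrow> j < p \<Longrightarrow> \<phi> i j = 0"
  shows "d1 \<le> d2 - p"
proof -
  from assms(1) obtain a b where oa: "orthonormal_fam d1 d1 a" and ob: "orthonormal_fam d2 d1 b"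
    and rep: "\<forall>i<d1. \<forall>j<d2. \<phi> i j = (\<Sum>l<d1. complex_of_real (1 / sqrt (real d1)) * a l i * b l j)"
    unfolding max_ent_def by blast
  define s where "s = complex_of_real (1 / sqrt (real d1))"
  have contract: "(\<Sum>i<d1. cnj (a k i) * \<phi> i j) = s * b k j" if "k < d1" "j < d2" for k j
  proof -
    have "(\<Sum>i<d1. cnj (a k i) * \<phi> i j) = (\<Sum>i<d1. \<Sum>l<d1. s * b l j * (cnj (a k i) * a l i))"
      using rep that by (intro sum.cong refl) (simp add: s_def sum_distrib_left mult_ac)
    also have "\<dots> = (\<Sum>l<d1. s * b l j * (\<Sum>i<d1. cnj (a k i) * a l i))"
      by (subst sum.swap) (simp add: sum_distrib_left)
    also have "\<dots> = (\<Sum>l<d1. if l = k then s * b l j else 0)"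
      using oa that unfolding orthonormal_fam_def by (intro sum.cong refl) auto
    finally show ?thesis using that by simp
  qed
  have "b k j = 0" if "k < d1" "j < p" "j < d2" for k j
  proof -
    have "s \<noteq> 0" using that(1) by (simp add: s_def)
    then show ?thesis using contract[of k j] zero that by simp
  qed
  then show ?thesis by (rule orthonormal_fam_vanishing_card_le[OF ob])
qed

theorem proposition2:
  fixes d n :: nat and \<psi> :: "nat \<Rightarrow> bistate"
  assumes "d \<ge> 2" and "1 \<le> n" and "n < d"
    and "\<forall>k<d^2. max_ent d d (\<psi> k)"
    and "\<forall>k<d^2. \<forall>l<d^2. ip d d (\<psi> k) (\<psi> l) = (if k = l then 1 else 0)"
    and "span_fam (d^2) \<psi> = space d d"
  shows "UMEB d (d + n) (d^2) \<psi>"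
proof -
  have sp: "in_space d d (\<psi> k)" if "k < d^2" for k
    using assms(4) that unfolding max_ent_def by blast
  have max_ent: "\<forall>k<d^2. max_ent d (d + n) (\<psi> k)"
    using assms(4) max_ent_extend le_add1 by blast
  have orth: "\<forall>k<d^2. \<forall>l<d^2. k \<noteq> l \<longrightarrow> ip d (d + n) (\<psi> k) (\<psi> l) = 0"
    using assms(5) ip_extend_right[OF sp le_add1] by simp
  have proper: "span_fam (d^2) \<psi> \<subset> space d (d + n)"
    using space_psubset[of d d "d + n"] assms(1,2,6) by simp
  have unextendible: "\<not> max_ent d (d + n) \<phi>"
    if \<phi>_orth: "\<forall>k<d^2. ip d (d + n) (\<psi> k) \<phi> = 0" for \<phi>
  proof
    assume "max_ent d (d + n) \<phi>"
    moreover have "\<phi> i j = 0" if "i < d" "j < d" for i j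
      using orthogonal_spanning_family_vanishes[OF assms(6) le_add1 \<phi>_orth] that by blast
    ultimately have "d \<le> n"
      using max_ent_vanishing_columns[of d "d + n" \<phi> d] by simp
    then show False using assms(3) by simp
  qed
  show ?thesis
    unfolding UMEB_def using max_ent orth proper unextendible by blast
qed

end
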